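(* Let $\mathcal{H}$ be a separable complex Hilbert space, let $T \in B(\mathcal{H})$, and write $T = A + iB$ with $A = A^*$ and $B = B^*$. If $\operatorname{rank}(A) = 1$ or $\operatorname{rank}(B) = 1$, then $T$ is a complex symmetric operator.
   Context: A conjugation on $\mathcal{H}$ is a conjugate-linear map $C:\mathcal{H}\to\mathcal{H}$ that is isometric and involutive ($C^2=I$). An operator $T$ is complex symmetric if $T = CT^*C$ for some conjugation $C$. *)

theory Defs
  imports "HOL-Analysis.Analysis"
begin

class cvector_space = ab_group_add +
  fixes scaleC :: "complex \<Rightarrow> 'a \<Rightarrow> 'a"
  assumes scaleC_add_right: "scaleC a (x + y) = scaleC a x + scaleC a y"
    and scaleC_add_left: "scaleC (a + b) x = scaleC a x + scaleC b x"
    and scaleC_scaleC: "scaleC a (scaleC b x) = scaleC (a * b) x"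
    and scaleC_one: "scaleC 1 x = x"

class cinner_space = cvector_space + real_normed_vector +
  fixes cinner :: "'a \<Rightarrow> 'a \<Rightarrow> complex"
  assumes scaleR_scaleC: "scaleR r x = scaleC (complex_of_real r) x"
    and cinner_conj: "cinner x y = cnj (cinner y x)"
    and cinner_add_right: "cinner x (y + z) = cinner x y + cinner x z"
    and cinner_scaleC_right: "cinner x (scaleC c y) = c * cinner x y"
    and cinner_self_norm: "cinner x x = complex_of_real ((norm x)\<^sup>2)"

class chilbert_space = cinner_space + complete_space

definition clinear :: "('a::cvector_space \<Rightarrow> 'b::cvector_space) \<Rightarrow> bool" where
  "clinear T \<longleftrightarrow> (\<forall>x y. T (x + y) = T x + T y) \<and> (\<forall>c x. T (scaleC c x) = scaleC c (T x))"

definition bounded_clinear :: "('a::cinner_space \<Rightarrow> 'b::cinner_space) \<Rightarrow> bool" where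
  "bounded_clinear T \<longleftrightarrow> clinear T \<and> (\<exists>K. \<forall>x. norm (T x) \<le> norm x * K)"

definition is_adjoint :: "('a::cinner_space \<Rightarrow> 'a) \<Rightarrow> ('a \<Rightarrow> 'a) \<Rightarrow> bool" where
  "is_adjoint T S \<longleftrightarrow> (\<forall>x y. cinner (T x) y = cinner x (S y))"

definition selfadjoint :: "('a::cinner_space \<Rightarrow> 'a) \<Rightarrow> bool" where
  "selfadjoint A \<longleftrightarrow> is_adjoint A A"

definition cspan :: "'a::cvector_space set \<Rightarrow> 'a set" where
  "cspan S = {(\<Sum>v\<in>F. scaleC (c v) v) | F c. finite F \<and> F \<subseteq> S}"

text \<open>Operators of infinite rank are assigned rank 0 here; this does
  not affect statements of the form \<open>crank T = 1\<close>.\<close>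
definition crank :: "('a::cvector_space \<Rightarrow> 'b::cvector_space) \<Rightarrow> nat" where
  "crank T = (if \<exists>F. finite F \<and> cspan F = range T
              then (LEAST n. \<exists>F. finite F \<and> card F = n \<and> cspan F = range T)
              else 0)"

definition conjugation :: "('a::cinner_space \<Rightarrow> 'a) \<Rightarrow> bool" where
  "conjugation C \<longleftrightarrow>
     (\<forall>x y. C (x + y) = C x + C y) \<and> (\<forall>c x. C (scaleC c x) = scaleC (cnj c) (C x)) \<and>
     (\<forall>x. norm (C x) = norm x) \<and> (\<forall>x. C (C x) = x)"

definition complex_symmetric :: "('a::cinner_space \<Rightarrow> 'a) \<Rightarrow> bool" where
  "complex_symmetric T \<longleftrightarrow>
     (\<exists>C S. conjugation C \<and> is_adjoint T S \<and> (\<forall>x. T x = C (S (C x))))"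

definition separable_space :: "'a::topological_space itself \<Rightarrow> bool" where
  "separable_space _ \<longleftrightarrow> (\<exists>D::'a set. countable D \<and> closure D = UNIV)"

end

theory Submission
  imports Defs
begin

text \<open>If \<open>A\<close> has rank one and is self-adjoint, then \<open>A x = \<kappa> \<langle>e, x\<rangle> e\<close> with \<open>\<kappa>\<close> real, so every
  conjugation \<open>C\<close> with \<open>C e = e\<close> satisfies \<open>C A C = A\<close>. If moreover \<open>C B C = B\<close>, then
  \<open>T = A + \<i> B\<close> is \<open>C\<close>-symmetric, because \<open>T\<^sup>* = A - \<i> B\<close>. Such a \<open>C\<close> exists for every
  bounded self-adjoint \<open>B\<close> and every vector \<open>e\<close>: by Zorn's lemma there is a maximal
  \<open>B\<close>-invariant subspace \<open>R \<ni> e\<close> on which all inner products are real. Then \<open>R + \<i> R\<close> is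
  dense, for a nonzero vector orthogonal to it would let its \<open>B\<close>-orbit enlarge \<open>R\<close>. The map
  \<open>r + \<i> s \<mapsto> r - \<i> s\<close> is an isometric conjugate-linear involution on \<open>R + \<i> R\<close> commuting
  with \<open>B\<close>, and its continuous extension is the required conjugation.\<close>

lemma scaleC_zero_right [simp]: "scaleC c (0::'a::cvector_space) = 0"
  using scaleC_add_right[of c "0::'a" 0] by (simp only: add_0_left add_cancel_right_right)

lemma scaleC_zero_left [simp]: "scaleC 0 (x::'a::cvector_space) = 0"
  using scaleC_add_left[of 0 0 x] by (simp only: add_0_left add_cancel_right_right)

lemma scaleC_minus_right: "scaleC c (- x) = - scaleC c (x::'a::cvector_space)"
proof -
  have "scaleC c (- x) + scaleC c x = 0"
    by (simp flip: scaleC_add_right)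
  then show ?thesis by (simp add: eq_neg_iff_add_eq_0)
qed

lemma scaleC_minus_left: "scaleC (- c) x = - scaleC c (x::'a::cvector_space)"
proof -
  have "scaleC (- c) x + scaleC c x = 0"
    by (simp flip: scaleC_add_left)
  then show ?thesis by (simp add: eq_neg_iff_add_eq_0)
qed

lemma scaleC_diff_right: "scaleC c (x - y) = scaleC c x - scaleC c (y::'a::cvector_space)"
  unfolding diff_conv_add_uminus by (simp only: scaleC_add_right scaleC_minus_right)

lemma scaleC_ii [simp]: "scaleC \<i> (scaleC \<i> x) = - (x::'a::cvector_space)"
  by (simp add: scaleC_scaleC scaleC_minus_left scaleC_one)

lemma scaleC_scaleR_commute: "scaleC c (r *\<^sub>R x) = r *\<^sub>R scaleC c (x::'a::cinner_space)"
  by (simp add: scaleR_scaleC scaleC_scaleC mult.commute)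

lemma scaleC_complex_combination:
  "scaleC c (r + scaleC \<i> s) =
     (Re c *\<^sub>R r - Im c *\<^sub>R s) + scaleC \<i> (Re c *\<^sub>R s + Im c *\<^sub>R (r::'a::cinner_space))"
proof -
  have "c = complex_of_real (Re c) + complex_of_real (Im c) * \<i>"
    by (simp add: complex_eq_iff)
  then have "scaleC c (r + scaleC \<i> s) = Re c *\<^sub>R (r + scaleC \<i> s) + Im c *\<^sub>R scaleC \<i> (r + scaleC \<i> s)"
    by (metis scaleC_add_left scaleC_scaleC scaleR_scaleC)
  then show ?thesis
    by (simp add: scaleC_add_right scaleC_scaleR_commute algebra_simps)
qed

lemma cinner_scaleC_left: "cinner (scaleC c x) y = cnj c * cinner x (y::'a::cinner_space)"
  by (subst (1 2) cinner_conj) (simp add: cinner_scaleC_right)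

lemma cinner_add_left: "cinner (x + y) z = cinner x z + cinner y (z::'a::cinner_space)"
  by (subst (1 2 3) cinner_conj) (simp add: cinner_add_right)

lemma cinner_zero_right [simp]: "cinner x (0::'a::cinner_space) = 0"
  using cinner_add_right[of x "0::'a" 0] by (simp only: add_0_left add_cancel_right_right)

lemma cinner_zero_left [simp]: "cinner (0::'a::cinner_space) x = 0"
  using cinner_add_left[of "0::'a" 0 x] by (simp only: add_0_left add_cancel_right_right)

lemma cinner_scaleR_right: "cinner x (r *\<^sub>R y) = complex_of_real r * cinner x (y::'a::cinner_space)"
  by (simp add: scaleR_scaleC cinner_scaleC_right)

lemma cinner_scaleR_left: "cinner (r *\<^sub>R x) y = complex_of_real r * cinner x (y::'a::cinner_space)"
  by (simp add: scaleR_scaleC cinner_scaleC_left)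

lemma cinner_minus_right: "cinner x (- y) = - cinner x (y::'a::cinner_space)"
  using cinner_scaleR_right[of x "-1" y] by simp

lemma cinner_self_eq_0_iff [simp]: "cinner x x = 0 \<longleftrightarrow> (x::'a::cinner_space) = 0"
  by (simp add: cinner_self_norm)

lemma Re_cinner_commute: "Re (cinner y x) = Re (cinner x (y::'a::cinner_space))"
  by (subst cinner_conj) simp

lemma norm_add_square:
  "(norm (x + y))\<^sup>2 = (norm x)\<^sup>2 + (norm y)\<^sup>2 + 2 * Re (cinner x (y::'a::cinner_space))"
proof -
  have "cinner (x + y) (x + y) = cinner x x + cinner y y + cinner x y + cinner y x"
    by (simp add: cinner_add_left cinner_add_right)
  then have "Re (cinner (x + y) (x + y)) = Re (cinner x x) + Re (cinner y y) + Re (cinner x y) + Re (cinner y x)"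
    by simp
  then show ?thesis by (simp add: cinner_self_norm Re_cinner_commute)
qed

lemma norm_diff_square:
  "(norm (x - y))\<^sup>2 = (norm x)\<^sup>2 + (norm y)\<^sup>2 - 2 * Re (cinner x (y::'a::cinner_space))"
  using norm_add_square[of x "- y"] by (simp add: cinner_minus_right)

lemma norm_scaleC: "norm (scaleC c x) = cmod c * norm (x::'a::cinner_space)"
proof -
  have cc: "cnj c * c = (complex_of_real (cmod c))\<^sup>2"
    by (simp add: mult.commute flip: complex_norm_square)
  have "cinner (scaleC c x) (scaleC c x) = (cnj c * c) * cinner x x"
    by (simp add: cinner_scaleC_left cinner_scaleC_right)
  also have "\<dots> = complex_of_real ((cmod c * norm x)\<^sup>2)"
    unfolding cc cinner_self_norm by (simp add: power_mult_distrib)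
  finally have "(norm (scaleC c x))\<^sup>2 = (cmod c * norm x)\<^sup>2"
    by (simp only: cinner_self_norm of_real_eq_iff)
  then show ?thesis
    using power2_eq_iff_nonneg[of "norm (scaleC c x)" "cmod c * norm x"] by simp
qed

lemma bounded_linear_scaleC: "bounded_linear (scaleC c :: 'a::cinner_space \<Rightarrow> 'a)"
  by (rule bounded_linear_intro[where K = "cmod c"])
     (auto simp: scaleC_add_right scaleC_scaleR_commute norm_scaleC mult.commute)

lemma continuous_on_scaleC [continuous_intros]:
  "continuous_on S f \<Longrightarrow> continuous_on S (\<lambda>x. scaleC c (f x :: 'a::cinner_space))"
  using bounded_linear.continuous_on[OF bounded_linear_scaleC] by blast

lemma bounded_clinear_imp_bounded_linear:
  "bounded_clinear T \<Longrightarrow> bounded_linear (T::'a::cinner_space \<Rightarrow> 'b::cinner_space)"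
  unfolding bounded_clinear_def clinear_def
  by (auto intro: bounded_linear_intro simp: scaleR_scaleC)

lemma bounded_clinear_scaleC: "bounded_clinear T \<Longrightarrow> T (scaleC c x) = scaleC c (T x)"
  unfolding bounded_clinear_def clinear_def by blast

subsection \<open>Nearest points and orthogonal vectors\<close>

lemma subspace_closure:
  fixes V :: "'a::real_normed_vector set"
  assumes "subspace V"
  shows "subspace (closure V)"
  unfolding subspace_def
proof (intro conjI ballI allI)
  show "0 \<in> closure V"
    using assms closure_subset subspace_0 by blast
next
  fix x y assume "x \<in> closure V" "y \<in> closure V"
  then obtain f g where f: "\<And>n. f n \<in> V" "f \<longlonglongrightarrow> x" and g: "\<And>n. g n \<in> V" "g \<longlonglongrightarrow> y"
    unfolding closure_sequential by blast
  have "(\<forall>n. f n + g n \<in> V) \<and> (\<lambda>n. f n + g n) \<longlonglongrightarrow> x + y"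
    using f g assms by (auto intro: tendsto_intros subspace_add)
  then show "x + y \<in> closure V"
    unfolding closure_sequential by (rule exI[of _ "\<lambda>n. f n + g n"])
next
  fix c :: real and x assume "x \<in> closure V"
  then obtain f where f: "\<And>n. f n \<in> V" "f \<longlonglongrightarrow> x"
    unfolding closure_sequential by blast
  have "(\<forall>n. c *\<^sub>R f n \<in> V) \<and> (\<lambda>n. c *\<^sub>R f n) \<longlonglongrightarrow> c *\<^sub>R x"
    using f assms by (auto intro: tendsto_intros subspace_scale)
  then show "c *\<^sub>R x \<in> closure V"
    unfolding closure_sequential by (rule exI[of _ "\<lambda>n. c *\<^sub>R f n"])
qed

lemma parallelogram_law:
  "(norm (x - y))\<^sup>2 + (norm (x + y))\<^sup>2 = 2 * (norm x)\<^sup>2 + 2 * (norm (y::'a::cinner_space))\<^sup>2"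
  using norm_add_square[of x y] norm_diff_square[of x y] by linarith

lemma minimizing_sequence_exists:
  fixes S :: "'a::metric_space set"
  assumes "S \<noteq> {}"
  obtains m where "\<And>n. m n \<in> S" "\<And>n. (dist x (m n))\<^sup>2 < (infdist x S)\<^sup>2 + inverse (real (Suc n))"
proof -
  have "\<forall>n. \<exists>y. y \<in> S \<and> (dist x y)\<^sup>2 < (infdist x S)\<^sup>2 + inverse (real (Suc n))"
  proof
    fix n
    define b where "b = (infdist x S)\<^sup>2 + inverse (real (Suc n))"
    have "b > 0" "infdist x S < sqrt b"
      unfolding b_def by (auto intro: real_less_rsqrt add_nonneg_pos infdist_nonneg)
    then have "Inf (dist x ` S) < sqrt b"
      using assms by (simp add: infdist_notempty)
    then obtain y where "y \<in> S" "dist x y < sqrt b"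
      using cInf_lessD[of "dist x ` S" "sqrt b"] assms by blast
    moreover have "(dist x y)\<^sup>2 < (sqrt b)\<^sup>2"
      using \<open>dist x y < sqrt b\<close> by (intro power_strict_mono) auto
    ultimately show "\<exists>y. y \<in> S \<and> (dist x y)\<^sup>2 < (infdist x S)\<^sup>2 + inverse (real (Suc n))"
      using \<open>b > 0\<close> unfolding b_def by auto
  qed
  then obtain m where "\<forall>n. m n \<in> S \<and> (dist x (m n))\<^sup>2 < (infdist x S)\<^sup>2 + inverse (real (Suc n))"
    using choice[of "\<lambda>n y. y \<in> S \<and> (dist x y)\<^sup>2 < (infdist x S)\<^sup>2 + inverse (real (Suc n))"] by blast
  then show ?thesis
    using that by blast
qed

lemma convex_minimizing_sequence_Cauchy:
  fixes S :: "'a::cinner_space set"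
  assumes "convex S" and m_in: "\<And>n. m n \<in> S"
    and m_close: "\<And>n. (dist x (m n))\<^sup>2 < (infdist x S)\<^sup>2 + inverse (real (Suc n))"
  shows "Cauchy m"
proof (rule metric_CauchyI)
  define d where "d = infdist x S"
  \<comment> \<open>The parallelogram law at the midpoint, which lies in \<open>S\<close> by convexity.\<close>
  have m_dist: "(dist (m n) (m k))\<^sup>2 \<le> 2 * inverse (real (Suc n)) + 2 * inverse (real (Suc k))" for n k
  proof -
    have mid: "(1/2) *\<^sub>R m n + (1/2) *\<^sub>R m k \<in> S"
      using assms(1) m_in by (intro convexD) auto
    have "dist x ((1/2) *\<^sub>R m n + (1/2) *\<^sub>R m k) = norm ((1/2) *\<^sub>R ((x - m n) + (x - m k)))"
      unfolding dist_norm by (simp add: algebra_simps flip: scaleR_add_left)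
    then have "d \<le> norm ((x - m n) + (x - m k)) / 2"
      using infdist_le[OF mid, of x] by (simp add: d_def)
    then have "4 * d\<^sup>2 \<le> (norm ((x - m n) + (x - m k)))\<^sup>2"
      using infdist_nonneg[of x S] power_mono[of "2 * d" "norm ((x - m n) + (x - m k))" 2]
      by (simp add: d_def power_mult_distrib)
    then show ?thesis
      using parallelogram_law[of "x - m n" "x - m k"] m_close[of n] m_close[of k]
      by (simp add: d_def dist_norm norm_minus_commute)
  qed
  fix e :: real assume "e > 0"
  then have "e\<^sup>2 / 4 > 0"
    by simp
  then obtain N where N: "inverse (real (Suc N)) < e\<^sup>2 / 4"
    using reals_Archimedean by blast
  have "dist (m a) (m b) < e" if "a \<ge> N" "b \<ge> N" for a b
  proof -
    have "inverse (real (Suc a)) \<le> inverse (real (Suc N))" "inverse (real (Suc b)) \<le> inverse (real (Suc N))"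
      using that by (simp_all add: le_imp_inverse_le)
    then have "(dist (m a) (m b))\<^sup>2 \<le> 4 * inverse (real (Suc N))"
      using m_dist[of a b] by linarith
    also have "\<dots> < e\<^sup>2"
      using N by linarith
    finally show ?thesis
      using \<open>e > 0\<close> by (auto intro: power2_less_imp_less)
  qed
  then show "\<exists>M. \<forall>a\<ge>M. \<forall>b\<ge>M. dist (m a) (m b) < e"
    by blast
qed

lemma convex_closed_nearest_point:
  fixes S :: "'a::chilbert_space set"
  assumes "convex S" "closed S" "S \<noteq> {}"
  obtains m where "m \<in> S" "\<And>y. y \<in> S \<Longrightarrow> dist x m \<le> dist x y"
proof -
  define d where "d = infdist x S"
  obtain m where m_in: "\<And>n. m n \<in> S"
    and m_close: "\<And>n. (dist x (m n))\<^sup>2 < d\<^sup>2 + inverse (real (Suc n))"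
    unfolding d_def using minimizing_sequence_exists[OF assms(3)] by blast
  have "Cauchy m"
    by (rule convex_minimizing_sequence_Cauchy[OF assms(1) m_in m_close[unfolded d_def]])
  then obtain m0 where lim: "m \<longlonglongrightarrow> m0"
    using Cauchy_convergent_iff convergent_def by blast
  have "m0 \<in> S"
    using closed_sequentially[OF assms(2) _ lim] m_in by blast
  moreover have "(dist x m0)\<^sup>2 \<le> d\<^sup>2"
  proof (rule LIMSEQ_le)
    show "(\<lambda>n. (dist x (m n))\<^sup>2) \<longlonglongrightarrow> (dist x m0)\<^sup>2"
      using lim by (intro tendsto_intros)
    show "(\<lambda>n. d\<^sup>2 + inverse (real (Suc n))) \<longlonglongrightarrow> d\<^sup>2"
      using tendsto_add[OF tendsto_const LIMSEQ_inverse_real_of_nat, of "d\<^sup>2"] by simp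
    show "\<exists>N. \<forall>n\<ge>N. (dist x (m n))\<^sup>2 \<le> d\<^sup>2 + inverse (real (Suc n))"
      using m_close less_imp_le by blast
  qed
  then have "dist x m0 \<le> d"
    using infdist_nonneg[of x S] unfolding d_def by (rule power2_le_imp_le)
  ultimately show ?thesis
    using that infdist_le[of _ S x] unfolding d_def by force
qed

lemma linear_le_quadratic_imp_zero:
  fixes a b :: real
  assumes "b \<ge> 0" and "\<And>t. 2 * t * a \<le> t\<^sup>2 * b"
  shows "a = 0"
proof (rule ccontr)
  assume "a \<noteq> 0"
  define t where "t = a / (b + 1)"
  have "2 * t * a - t\<^sup>2 * b = (a * a) * (b + 2) / ((b + 1) * (b + 1))"
    unfolding t_def using assms(1) by (simp add: power2_eq_square divide_simps; algebra)
  moreover have "(a * a) * (b + 2) / ((b + 1) * (b + 1)) > 0"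
    using \<open>a \<noteq> 0\<close> assms(1) by (auto simp: zero_less_mult_iff zero_less_divide_iff)
  ultimately show False
    using assms(2)[of t] by linarith
qed

lemma nearest_point_orthogonal:
  fixes M :: "'a::cinner_space set"
  assumes "subspace M" "m \<in> M" "\<And>y. y \<in> M \<Longrightarrow> dist x m \<le> dist x y" "v \<in> M"
  shows "Re (cinner (x - m) v) = 0"
proof (rule linear_le_quadratic_imp_zero[where b = "(norm v)\<^sup>2"])
  fix t :: real
  have "m + t *\<^sub>R v \<in> M"
    using assms by (simp add: subspace_add subspace_scale)
  then have "norm (x - m) \<le> norm ((x - m) - t *\<^sub>R v)"
    using assms(3) by (force simp: dist_norm algebra_simps)
  then have "(norm (x - m))\<^sup>2 \<le> (norm ((x - m) - t *\<^sub>R v))\<^sup>2"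
    by (simp add: power_mono)
  then show "2 * t * Re (cinner (x - m) v) \<le> t\<^sup>2 * (norm v)\<^sup>2"
    by (simp add: norm_diff_square cinner_scaleR_right power_mult_distrib)
qed simp

lemma exists_orthogonal_vector:
  fixes V :: "'a::chilbert_space set"
  assumes "subspace V" "\<And>v. v \<in> V \<Longrightarrow> scaleC \<i> v \<in> V" "closure V \<noteq> UNIV"
  obtains w where "w \<noteq> 0" "\<And>v. v \<in> V \<Longrightarrow> cinner v w = 0"
proof -
  obtain x where x: "x \<notin> closure V"
    using assms(3) by blast
  have subspace_closure_V: "subspace (closure V)"
    using assms(1) by (rule subspace_closure)
  then obtain m where m: "m \<in> closure V" "\<And>y. y \<in> closure V \<Longrightarrow> dist x m \<le> dist x y"
    using convex_closed_nearest_point[of "closure V" x] subspace_0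
    by (metis closed_closure empty_iff subspace_imp_convex)
  have Re0: "Re (cinner (x - m) v) = 0" if "v \<in> V" for v
    using nearest_point_orthogonal[OF subspace_closure_V m] closure_subset that by blast
  have "cinner v (x - m) = 0" if "v \<in> V" for v
  proof -
    have "Im (cinner (x - m) v) = 0"
      using Re0[OF assms(2)[OF that]] by (simp add: cinner_scaleC_right)
    then have "cinner (x - m) v = 0"
      using Re0[OF that] by (simp add: complex_eq_iff)
    then show ?thesis
      by (subst cinner_conj) simp
  qed
  moreover have "x - m \<noteq> 0"
    using x m(1) by auto
  ultimately show ?thesis
    using that by blast
qed

subsection \<open>Invariant totally real subspaces\<close>

lemma cinner_funpow_selfadjoint:
  assumes "selfadjoint B"
  shows "cinner ((B ^^ n) x) y = cinner x ((B ^^ n) y)"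
proof (induction n arbitrary: y)
  case (Suc n)
  have "cinner ((B ^^ Suc n) x) y = cinner ((B ^^ n) x) (B y)"
    using assms by (simp add: selfadjoint_def is_adjoint_def)
  also have "\<dots> = cinner x ((B ^^ Suc n) y)"
    by (simp add: Suc funpow_swap1)
  finally show ?case .
qed simp

lemma Im_cinner_funpow_selfadjoint:
  assumes "selfadjoint B"
  shows "Im (cinner ((B ^^ j) x) ((B ^^ k) x)) = 0"
proof -
  define z where "z = cinner x ((B ^^ (j + k)) x)"
  have "cinner ((B ^^ j) x) ((B ^^ k) x) = z"
    unfolding z_def by (simp add: cinner_funpow_selfadjoint[OF assms] funpow_add)
  moreover have "z = cnj z"
    unfolding z_def by (subst cinner_conj) (simp add: cinner_funpow_selfadjoint[OF assms])
  then have "Im z = 0"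
    by (metis cnj.sel(2) neg_equal_zero)
  ultimately show ?thesis
    by simp
qed

lemma funpow_orbit_invariant: "f ` range (\<lambda>n. (f ^^ n) x) \<subseteq> range (\<lambda>n. (f ^^ n) x)"
proof (rule image_subsetI)
  fix y assume "y \<in> range (\<lambda>n. (f ^^ n) x)"
  then obtain n where "f y = (f ^^ Suc n) x"
    by auto
  then show "f y \<in> range (\<lambda>n. (f ^^ n) x)"
    by (rule range_eqI)
qed

lemma funpow_mem_invariant: "f ` R \<subseteq> R \<Longrightarrow> r \<in> R \<Longrightarrow> (f ^^ n) r \<in> R"
  by (induction n) auto

lemma bounded_clinear_image_span_subset:
  assumes "bounded_clinear B" "B ` G \<subseteq> G"
  shows "B ` span G \<subseteq> span G"
proof -
  have "linear B"
    using assms(1) by (simp add: bounded_clinear_imp_bounded_linear bounded_linear.linear)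
  then show ?thesis
    using span_mono[OF assms(2)] by (simp flip: span_linear_image)
qed

definition totally_real_subspace :: "'a::cinner_space set \<Rightarrow> bool" where
  "totally_real_subspace R \<longleftrightarrow> subspace R \<and> (\<forall>x\<in>R. \<forall>y\<in>R. Im (cinner x y) = 0)"

lemma totally_real_subspace_span:
  assumes "\<And>a b. a \<in> G \<Longrightarrow> b \<in> G \<Longrightarrow> Im (cinner a (b::'a::cinner_space)) = 0"
  shows "totally_real_subspace (span G)"
proof -
  have Im_left: "Im (cinner a b) = 0" if "a \<in> span G" "b \<in> G" for a b
  proof -
    have "subspace {a. Im (cinner a b) = 0}"
      unfolding subspace_def by (simp add: cinner_add_left cinner_scaleR_left)
    moreover have "G \<subseteq> {a. Im (cinner a b) = 0}"
      using assms that(2) by blast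
    ultimately show ?thesis
      using span_minimal that(1) by blast
  qed
  have "Im (cinner a b) = 0" if "a \<in> span G" "b \<in> span G" for a b
  proof -
    have "subspace {b. Im (cinner a b) = 0}"
      unfolding subspace_def by (simp add: cinner_add_right cinner_scaleR_right)
    moreover have "G \<subseteq> {b. Im (cinner a b) = 0}"
      using Im_left that(1) by blast
    ultimately show ?thesis
      using span_minimal that(2) by blast
  qed
  then show ?thesis
    unfolding totally_real_subspace_def by (simp add: subspace_span)
qed

lemma totally_real_subspace_Union_chain:
  assumes "\<C> \<noteq> {}" "\<And>R. R \<in> \<C> \<Longrightarrow> totally_real_subspace R"
    and "\<And>X Y. X \<in> \<C> \<Longrightarrow> Y \<in> \<C> \<Longrightarrow> X \<subseteq> Y \<or> Y \<subseteq> X"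
  shows "totally_real_subspace (\<Union>\<C>)"
proof -
  have common: "\<exists>R\<in>\<C>. x \<in> R \<and> y \<in> R" if "x \<in> \<Union>\<C>" "y \<in> \<Union>\<C>" for x y
    using that assms(3) by blast
  have "subspace (\<Union>\<C>)"
    unfolding subspace_def
  proof (intro conjI ballI allI)
    obtain R where "R \<in> \<C>"
      using assms(1) by blast
    then show "0 \<in> \<Union>\<C>"
      using assms(2) subspace_0 unfolding totally_real_subspace_def by blast
  next
    fix x y assume "x \<in> \<Union>\<C>" "y \<in> \<Union>\<C>"
    then show "x + y \<in> \<Union>\<C>"
      using common assms(2) by (meson UnionI subspace_add totally_real_subspace_def)
  next
    fix c :: real and x assume "x \<in> \<Union>\<C>"
    then show "c *\<^sub>R x \<in> \<Union>\<C>"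
      using assms(2) by (meson UnionE UnionI subspace_scale totally_real_subspace_def)
  qed
  moreover have "Im (cinner x y) = 0" if "x \<in> \<Union>\<C>" "y \<in> \<Union>\<C>" for x y
    using common[OF that] assms(2) by (auto simp: totally_real_subspace_def)
  ultimately show ?thesis
    unfolding totally_real_subspace_def by blast
qed

lemma exists_maximal_invariant_totally_real_subspace:
  fixes B :: "'a::cinner_space \<Rightarrow> 'a"
  assumes "bounded_clinear B" "selfadjoint B"
  obtains R where "totally_real_subspace R" "B ` R \<subseteq> R" "e \<in> R"
    "\<And>R'. totally_real_subspace R' \<Longrightarrow> B ` R' \<subseteq> R' \<Longrightarrow> R \<subseteq> R' \<Longrightarrow> R' = R"
proof -
  define \<F> where "\<F> = {R. totally_real_subspace R \<and> B ` R \<subseteq> R \<and> e \<in> R}"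
  let ?orbit = "range (\<lambda>n. (B ^^ n) e)"
  have orbit_span: "span ?orbit \<in> \<F>"
  proof -
    have "e \<in> ?orbit"
      by (metis funpow_0 rangeI)
    moreover have "totally_real_subspace (span ?orbit)"
      using Im_cinner_funpow_selfadjoint[OF assms(2)] by (auto intro: totally_real_subspace_span)
    ultimately show ?thesis
      unfolding \<F>_def using bounded_clinear_image_span_subset[OF assms(1) funpow_orbit_invariant]
      by (auto intro: span_base)
  qed
  have chain_Union: "\<Union>\<C> \<in> \<F>" if "\<C> \<noteq> {}" "subset.chain \<F> \<C>" for \<C>
  proof -
    have \<C>: "\<And>R. R \<in> \<C> \<Longrightarrow> totally_real_subspace R \<and> B ` R \<subseteq> R \<and> e \<in> R"
      "\<And>X Y. X \<in> \<C> \<Longrightarrow> Y \<in> \<C> \<Longrightarrow> X \<subseteq> Y \<or> Y \<subseteq> X"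
      using that(2) unfolding subset_chain_def \<F>_def by blast+
    have "totally_real_subspace (\<Union>\<C>)"
      using \<C> that(1) by (intro totally_real_subspace_Union_chain) auto
    moreover have "B ` \<Union>\<C> \<subseteq> \<Union>\<C>"
      using \<C>(1) by blast
    moreover have "e \<in> \<Union>\<C>"
      using \<C>(1) that(1) by blast
    ultimately show ?thesis
      unfolding \<F>_def by blast
  qed
  have "\<F> \<noteq> {}"
    using orbit_span by blast
  from subset_Zorn_nonempty[OF this chain_Union]
  obtain R where R: "R \<in> \<F>" and R_max: "\<And>X. X \<in> \<F> \<Longrightarrow> R \<subseteq> X \<Longrightarrow> X = R"
    by blast
  show ?thesis
  proof (rule that)
    show "totally_real_subspace R" "B ` R \<subseteq> R" "e \<in> R"
      using R unfolding \<F>_def by blast+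
    fix R' assume "totally_real_subspace R'" "B ` R' \<subseteq> R'" "R \<subseteq> R'"
    then show "R' = R"
      using R R_max unfolding \<F>_def by blast
  qed
qed

subsection \<open>Complexification of a totally real subspace\<close>

definition complexification :: "'a::cvector_space set \<Rightarrow> 'a set" where
  "complexification R = {r + scaleC \<i> s | r s. r \<in> R \<and> s \<in> R}"

lemma subset_complexification:
  assumes "subspace (R::'a::cinner_space set)"
  shows "R \<subseteq> complexification R"
proof
  fix r assume "r \<in> R"
  moreover have "r = r + scaleC \<i> 0"
    by simp
  ultimately show "r \<in> complexification R"
    using assms subspace_0 unfolding complexification_def by blast
qed

lemma subspace_complexification:
  assumes "subspace (R::'a::cinner_space set)"
  shows "subspace (complexification R)"
  unfolding subspace_def
proof (intro conjI ballI allI)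
  show "0 \<in> complexification R"
    using subset_complexification assms subspace_0 by blast
next
  fix x y assume "x \<in> complexification R" "y \<in> complexification R"
  then obtain r s r' s' where "r \<in> R" "s \<in> R" "r' \<in> R" "s' \<in> R"
    and "x = r + scaleC \<i> s" "y = r' + scaleC \<i> s'"
    unfolding complexification_def by blast
  moreover have "x + y = (r + r') + scaleC \<i> (s + s')"
    using calculation by (simp add: scaleC_add_right algebra_simps)
  ultimately show "x + y \<in> complexification R"
    using assms unfolding complexification_def by (blast intro: subspace_add)
next
  fix c :: real and x assume "x \<in> complexification R"
  then obtain r s where "r \<in> R" "s \<in> R" "x = r + scaleC \<i> s"
    unfolding complexification_def by blast
  moreover have "c *\<^sub>R x = c *\<^sub>R r + scaleC \<i> (c *\<^sub>R s)"
    using calculation by (simp add: scaleC_scaleR_commute scaleR_add_right)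
  ultimately show "c *\<^sub>R x \<in> complexification R"
    using assms unfolding complexification_def by (blast intro: subspace_scale)
qed

lemma scaleC_complexification:
  assumes "subspace R" "v \<in> complexification (R::'a::cinner_space set)"
  shows "scaleC c v \<in> complexification R"
proof -
  obtain r s where rs: "r \<in> R" "s \<in> R" and v: "v = r + scaleC \<i> s"
    using assms(2) unfolding complexification_def by blast
  have "Re c *\<^sub>R r - Im c *\<^sub>R s \<in> R" "Re c *\<^sub>R s + Im c *\<^sub>R r \<in> R"
    using assms(1) rs by (simp_all add: subspace_add subspace_diff subspace_scale)
  then show ?thesis
    unfolding complexification_def v scaleC_complex_combination by blast
qed

lemma totally_real_subspace_span_Un_orbit:
  fixes B :: "'a::cinner_space \<Rightarrow> 'a"
  assumes "selfadjoint B" "totally_real_subspace R" "B ` R \<subseteq> R"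
    and w_orth: "\<And>r. r \<in> R \<Longrightarrow> cinner r w = 0"
  shows "totally_real_subspace (span (R \<union> range (\<lambda>n. (B ^^ n) w)))"
proof (rule totally_real_subspace_span)
  have orbit_orth: "cinner r ((B ^^ n) w) = 0" if "r \<in> R" for r n
  proof -
    have "cinner r ((B ^^ n) w) = cinner ((B ^^ n) r) w"
      by (simp add: cinner_funpow_selfadjoint[OF assms(1)])
    also have "\<dots> = 0"
      using w_orth funpow_mem_invariant[OF assms(3) that] by blast
    finally show ?thesis .
  qed
  fix a b assume ab: "a \<in> R \<union> range (\<lambda>n. (B ^^ n) w)" "b \<in> R \<union> range (\<lambda>n. (B ^^ n) w)"
  then consider "a \<in> R" "b \<in> R" | n where "a \<in> R" "b = (B ^^ n) w"
    | n where "a = (B ^^ n) w" "b \<in> R" | j k where "a = (B ^^ j) w" "b = (B ^^ k) w"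
    by blast
  then show "Im (cinner a b) = 0"
  proof cases
    case 1
    then show ?thesis
      using assms(2) by (simp add: totally_real_subspace_def)
  next
    case 2
    then show ?thesis
      using orbit_orth by simp
  next
    case 3
    then show ?thesis
      using orbit_orth[of b] by (subst cinner_conj) simp
  next
    case 4
    then show ?thesis
      using Im_cinner_funpow_selfadjoint[OF assms(1)] by simp
  qed
qed

lemma maximal_totally_real_subspace_complexification_dense:
  fixes B :: "'a::chilbert_space \<Rightarrow> 'a"
  assumes "bounded_clinear B" "selfadjoint B" "totally_real_subspace R" "B ` R \<subseteq> R"
    and maximal: "\<And>R'. totally_real_subspace R' \<Longrightarrow> B ` R' \<subseteq> R' \<Longrightarrow> R \<subseteq> R' \<Longrightarrow> R' = R"
  shows "closure (complexification R) = UNIV"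
proof (rule ccontr)
  have "subspace R"
    using assms(3) by (simp add: totally_real_subspace_def)
  assume "closure (complexification R) \<noteq> UNIV"
  then obtain w where "w \<noteq> 0" and w_orth: "\<And>v. v \<in> complexification R \<Longrightarrow> cinner v w = 0"
    using exists_orthogonal_vector[OF subspace_complexification[OF \<open>subspace R\<close>]
        scaleC_complexification[OF \<open>subspace R\<close>]] by blast
  let ?R' = "span (R \<union> range (\<lambda>n. (B ^^ n) w))"
  have "totally_real_subspace ?R'"
    using w_orth subset_complexification[OF \<open>subspace R\<close>]
    by (intro totally_real_subspace_span_Un_orbit[OF assms(2-4)]) blast
  moreover have "B ` (R \<union> range (\<lambda>n. (B ^^ n) w)) \<subseteq> R \<union> range (\<lambda>n. (B ^^ n) w)"
    unfolding image_Un using assms(4) funpow_orbit_invariant[of B w] by blast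
  then have "B ` ?R' \<subseteq> ?R'"
    by (rule bounded_clinear_image_span_subset[OF assms(1)])
  ultimately have "?R' = R"
    by (rule maximal) (use span_superset in blast)
  moreover have "w \<in> ?R'"
    by (metis UnI2 funpow_0 rangeI span_base)
  ultimately have "cinner w w = 0"
    using w_orth subset_complexification[OF \<open>subspace R\<close>] by blast
  then show False
    using \<open>w \<noteq> 0\<close> by simp
qed

text \<open>On \<open>complexification R\<close> with \<open>R\<close> totally real the decomposition \<open>r + \<i> s\<close> is unique
  (\<open>totally_real_add_scaleC_i_eq_0\<close>), so \<open>THE\<close> is well defined there; elsewhere its value
  is unspecified.\<close>

definition complexification_conj :: "'a::cvector_space set \<Rightarrow> 'a \<Rightarrow> 'a" where
  "complexification_conj R v =
     (THE u. \<exists>r s. r \<in> R \<and> s \<in> R \<and> v = r + scaleC \<i> s \<and> u = r - scaleC \<i> s)"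

context
  fixes R :: "'a::cinner_space set"
  assumes R: "totally_real_subspace R"
begin

lemma totally_real_add_scaleC_i_eq_0:
  assumes "p \<in> R" "q \<in> R" "p + scaleC \<i> q = 0"
  shows "p = 0 \<and> q = 0"
proof -
  have "0 = Re (cinner p (p + scaleC \<i> q))"
    using assms(3) by simp
  also have "\<dots> = (norm p)\<^sup>2 - Im (cinner p q)"
    by (simp add: cinner_add_right cinner_scaleC_right cinner_self_norm)
  also have "Im (cinner p q) = 0"
    using R assms(1,2) by (simp add: totally_real_subspace_def)
  finally have "p = 0"
    by simp
  then have "scaleC \<i> (scaleC \<i> q) = 0"
    using assms(3) by simp
  then show ?thesis
    using \<open>p = 0\<close> by simp
qed

lemma complexification_conj_eq:
  assumes "r \<in> R" "s \<in> R"
  shows "complexification_conj R (r + scaleC \<i> s) = r - scaleC \<i> s"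
  unfolding complexification_conj_def
proof (rule the_equality)
  show "\<exists>r' s'. r' \<in> R \<and> s' \<in> R \<and> r + scaleC \<i> s = r' + scaleC \<i> s' \<and> r - scaleC \<i> s = r' - scaleC \<i> s'"
    using assms by blast
next
  fix u assume "\<exists>r' s'. r' \<in> R \<and> s' \<in> R \<and> r + scaleC \<i> s = r' + scaleC \<i> s' \<and> u = r' - scaleC \<i> s'"
  then obtain r' s' where r's': "r' \<in> R" "s' \<in> R" "r + scaleC \<i> s = r' + scaleC \<i> s'"
    and u: "u = r' - scaleC \<i> s'"
    by blast
  have "(r - r') + scaleC \<i> (s - s') = 0"
    using r's'(3) by (simp add: scaleC_diff_right algebra_simps)
  moreover have "r - r' \<in> R" "s - s' \<in> R"
    using R assms r's' by (simp_all add: totally_real_subspace_def subspace_diff)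
  ultimately have "r - r' = 0 \<and> s - s' = 0"
    by (intro totally_real_add_scaleC_i_eq_0)
  then show "u = r - scaleC \<i> s"
    using u by simp
qed

lemma complexification_conj_fixes: "r \<in> R \<Longrightarrow> complexification_conj R r = r"
  using complexification_conj_eq[of r 0] R by (simp add: totally_real_subspace_def subspace_0)

lemma complexification_conj_eq_neg:
  assumes "r \<in> R" "s \<in> R"
  shows "complexification_conj R (r + scaleC \<i> s) = r + scaleC \<i> (- s)"
  using complexification_conj_eq[OF assms] by (simp add: scaleC_minus_right)

lemma complexification_conj_mem:
  assumes "v \<in> complexification R"
  shows "complexification_conj R v \<in> complexification R"
proof -
  obtain r s where rs: "r \<in> R" "s \<in> R" and v: "v = r + scaleC \<i> s"
    using assms unfolding complexification_def by blast
  moreover have "- s \<in> R"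
    using R rs by (simp add: totally_real_subspace_def subspace_neg)
  ultimately show ?thesis
    unfolding complexification_def v complexification_conj_eq_neg[OF rs] by blast
qed

lemma complexification_conj_involution:
  assumes "v \<in> complexification R"
  shows "complexification_conj R (complexification_conj R v) = v"
proof -
  obtain r s where rs: "r \<in> R" "s \<in> R" and v: "v = r + scaleC \<i> s"
    using assms unfolding complexification_def by blast
  have "- s \<in> R"
    using R rs by (simp add: totally_real_subspace_def subspace_neg)
  then show ?thesis
    unfolding v complexification_conj_eq_neg[OF rs] complexification_conj_eq_neg[OF rs(1) \<open>- s \<in> R\<close>]
    by simp
qed

lemma complexification_conj_add:
  assumes "v \<in> complexification R" "w \<in> complexification R"
  shows "complexification_conj R (v + w) = complexification_conj R v + complexification_conj R w"
proof -
  obtain r s r' s' where rs: "r \<in> R" "s \<in> R" "r' \<in> R" "s' \<in> R"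
    and v: "v = r + scaleC \<i> s" and w: "w = r' + scaleC \<i> s'"
    using assms unfolding complexification_def by blast
  have "v + w = (r + r') + scaleC \<i> (s + s')"
    unfolding v w by (simp add: scaleC_add_right algebra_simps)
  moreover have "r + r' \<in> R" "s + s' \<in> R"
    using R rs by (simp_all add: totally_real_subspace_def subspace_add)
  ultimately have "complexification_conj R (v + w) = (r + r') - scaleC \<i> (s + s')"
    by (simp add: complexification_conj_eq)
  also have "\<dots> = complexification_conj R v + complexification_conj R w"
    unfolding v w complexification_conj_eq[OF rs(1,2)] complexification_conj_eq[OF rs(3,4)]
    by (simp add: scaleC_add_right algebra_simps)
  finally show ?thesis .
qed

lemma complexification_conj_scaleC:
  assumes "v \<in> complexification R"
  shows "complexification_conj R (scaleC c v) = scaleC (cnj c) (complexification_conj R v)"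
proof -
  obtain r s where rs: "r \<in> R" "s \<in> R" and v: "v = r + scaleC \<i> s"
    using assms unfolding complexification_def by blast
  define p where "p = Re c *\<^sub>R r - Im c *\<^sub>R s"
  define q where "q = Re c *\<^sub>R s + Im c *\<^sub>R r"
  have pq: "p \<in> R" "q \<in> R"
    using R rs unfolding p_def q_def
    by (simp_all add: totally_real_subspace_def subspace_add subspace_diff subspace_scale)
  have "scaleC c v = p + scaleC \<i> q"
    unfolding v p_def q_def by (rule scaleC_complex_combination)
  then have "complexification_conj R (scaleC c v) = p - scaleC \<i> q"
    by (simp add: complexification_conj_eq[OF pq])
  also have "\<dots> = scaleC (cnj c) (complexification_conj R v)"
    unfolding v complexification_conj_eq_neg[OF rs] scaleC_complex_combination
    by (simp add: p_def q_def scaleC_add_right scaleC_diff_right scaleC_minus_right algebra_simps)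
  finally show ?thesis .
qed

lemma norm_complexification_conj:
  assumes "v \<in> complexification R"
  shows "norm (complexification_conj R v) = norm v"
proof -
  obtain r s where rs: "r \<in> R" "s \<in> R" and v: "v = r + scaleC \<i> s"
    using assms unfolding complexification_def by blast
  have "Re (cinner r (scaleC \<i> s)) = 0"
    using R rs by (simp add: totally_real_subspace_def cinner_scaleC_right)
  then have "(norm (r - scaleC \<i> s))\<^sup>2 = (norm (r + scaleC \<i> s))\<^sup>2"
    by (simp add: norm_add_square norm_diff_square)
  then have "norm (r - scaleC \<i> s) = norm (r + scaleC \<i> s)"
    using power2_eq_iff_nonneg[of "norm (r - scaleC \<i> s)" "norm (r + scaleC \<i> s)"] by simp
  then show ?thesis
    unfolding v complexification_conj_eq[OF rs] .
qed

lemma complexification_conj_commute: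
  assumes "bounded_clinear B" "B ` R \<subseteq> R" "v \<in> complexification R"
  shows "B v \<in> complexification R \<and> complexification_conj R (B v) = B (complexification_conj R v)"
proof -
  obtain r s where rs: "r \<in> R" "s \<in> R" and v: "v = r + scaleC \<i> s"
    using assms(3) unfolding complexification_def by blast
  have B_add: "B (x + y) = B x + B y" and B_diff: "B (x - y) = B x - B y" for x y
    using bounded_linear.linear[OF bounded_clinear_imp_bounded_linear[OF assms(1)]]
    by (simp_all add: linear_add linear_diff)
  have Bv: "B v = B r + scaleC \<i> (B s)"
    unfolding v by (simp add: B_add bounded_clinear_scaleC[OF assms(1)])
  have BR: "B r \<in> R" "B s \<in> R"
    using assms(2) rs by auto
  have "complexification_conj R (B v) = B r - scaleC \<i> (B s)"
    unfolding Bv by (rule complexification_conj_eq[OF BR])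
  also have "\<dots> = B (r - scaleC \<i> s)"
    by (simp add: B_diff bounded_clinear_scaleC[OF assms(1)])
  also have "r - scaleC \<i> s = complexification_conj R v"
    unfolding v by (rule complexification_conj_eq[OF rs, symmetric])
  finally show ?thesis
    unfolding Bv complexification_def using BR by blast
qed

end

subsection \<open>Conjugations commuting with a self-adjoint operator\<close>

lemma continuous_on_dense_eq:
  fixes f g :: "'a::topological_space \<Rightarrow> 'b::t2_space"
  assumes "continuous_on UNIV f" "continuous_on UNIV g" "closure V = UNIV"
    and "\<And>x. x \<in> V \<Longrightarrow> f x = g x"
  shows "f x = g x"
proof -
  have "closure V \<subseteq> {x. f x = g x}"
    using assms by (intro closure_minimal closed_Collect_eq) auto
  then show ?thesis
    using assms(3) by blast
qed

lemma uniformly_continuous_on_additive_isometry: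
  fixes f :: "'a::real_normed_vector \<Rightarrow> 'b::real_normed_vector"
  assumes "subspace V"
    and f_add: "\<And>v w. v \<in> V \<Longrightarrow> w \<in> V \<Longrightarrow> f (v + w) = f v + f w"
    and f_norm: "\<And>v. v \<in> V \<Longrightarrow> norm (f v) = norm v"
  shows "uniformly_continuous_on V f"
  unfolding uniformly_continuous_on_def
proof (intro allI impI)
  fix e :: real assume "e > 0"
  have "dist (f v) (f w) = dist v w" if "v \<in> V" "w \<in> V" for v w
  proof -
    have "f v = f (v - w) + f w"
      using f_add[of "v - w" w] that assms(1) by (simp add: subspace_diff)
    then show ?thesis
      using that assms(1) by (simp add: dist_norm f_norm subspace_diff)
  qed
  then show "\<exists>d>0. \<forall>x\<in>V. \<forall>x'\<in>V. dist x' x < d \<longrightarrow> dist (f x') (f x) < e"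
    using \<open>e > 0\<close> by auto
qed

lemma conjugation_extension:
  fixes f :: "'a::chilbert_space \<Rightarrow> 'a"
  assumes V: "subspace V" "closure V = UNIV" "\<And>c v. v \<in> V \<Longrightarrow> scaleC c v \<in> V"
    and f_mem: "\<And>v. v \<in> V \<Longrightarrow> f v \<in> V"
    and f_add: "\<And>v w. v \<in> V \<Longrightarrow> w \<in> V \<Longrightarrow> f (v + w) = f v + f w"
    and f_scaleC: "\<And>c v. v \<in> V \<Longrightarrow> f (scaleC c v) = scaleC (cnj c) (f v)"
    and f_norm: "\<And>v. v \<in> V \<Longrightarrow> norm (f v) = norm v"
    and f_involution: "\<And>v. v \<in> V \<Longrightarrow> f (f v) = v"
  obtains g where "conjugation g" "continuous_on UNIV g" "\<And>v. v \<in> V \<Longrightarrow> g v = f v"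
proof -
  have "uniformly_continuous_on V f"
    using V(1) f_add f_norm by (rule uniformly_continuous_on_additive_isometry)
  then obtain g where g_uc: "uniformly_continuous_on (closure V) g"
    and fg: "\<And>v. v \<in> V \<Longrightarrow> f v = g v"
    by (rule uniformly_continuous_on_extension_on_closure) blast
  have g_cont: "continuous_on UNIV g"
    using uniformly_continuous_imp_continuous[OF g_uc] V(2) by simp
  have g_comp: "continuous_on UNIV (\<lambda>x. g (h x))" if "continuous_on UNIV h" for h :: "'a \<Rightarrow> 'a"
    using continuous_on_compose2[OF g_cont that] by simp
  have g_norm: "norm (g x) = norm x" for x
    by (rule continuous_on_dense_eq[OF _ _ V(2), of "\<lambda>x. norm (g x)" norm])
       (auto intro!: continuous_intros g_cont simp: f_norm simp flip: fg)
  have g_add_V: "g (x + w) = g x + g w" if "w \<in> V" for x w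
    by (rule continuous_on_dense_eq[OF _ _ V(2), of "\<lambda>x. g (x + w)" "\<lambda>x. g x + g w"])
       (auto intro!: continuous_intros g_cont g_comp simp: that f_add subspace_add[OF V(1)] simp flip: fg)
  have g_add: "g (x + y) = g x + g y" for x y
    by (rule continuous_on_dense_eq[OF _ _ V(2), of "\<lambda>y. g (x + y)" "\<lambda>y. g x + g y"])
       (auto intro!: continuous_intros g_cont g_comp simp: g_add_V)
  have g_scaleC: "g (scaleC c x) = scaleC (cnj c) (g x)" for c x
    by (rule continuous_on_dense_eq[OF _ _ V(2), of "\<lambda>x. g (scaleC c x)" "\<lambda>x. scaleC (cnj c) (g x)"])
       (auto intro!: continuous_intros g_cont g_comp simp: V(3) f_scaleC simp flip: fg)
  have g_involution: "g (g x) = x" for x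
    by (rule continuous_on_dense_eq[OF _ _ V(2), of "\<lambda>x. g (g x)" "\<lambda>x. x"])
       (auto intro!: continuous_intros g_cont g_comp simp: f_mem f_involution simp flip: fg)
  have "conjugation g"
    unfolding conjugation_def using g_add g_scaleC g_norm g_involution by blast
  then show ?thesis
    using that g_cont fg by metis
qed

lemma exists_conjugation_commuting:
  fixes B :: "'a::chilbert_space \<Rightarrow> 'a"
  assumes "bounded_clinear B" "selfadjoint B"
  obtains C where "conjugation C" "\<And>x. C (B x) = B (C x)" "C e = e"
proof -
  obtain R where R: "totally_real_subspace R" "B ` R \<subseteq> R" "e \<in> R"
    and maximal: "\<And>R'. totally_real_subspace R' \<Longrightarrow> B ` R' \<subseteq> R' \<Longrightarrow> R \<subseteq> R' \<Longrightarrow> R' = R"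
    using exists_maximal_invariant_totally_real_subspace[OF assms, where e = e] by blast
  have subspace_R: "subspace R"
    using R(1) by (simp add: totally_real_subspace_def)
  have dense: "closure (complexification R) = UNIV"
    by (rule maximal_totally_real_subspace_complexification_dense[OF assms R(1,2) maximal])
  obtain C where C: "conjugation C" "continuous_on UNIV C"
    and C_eq: "\<And>v. v \<in> complexification R \<Longrightarrow> C v = complexification_conj R v"
    using conjugation_extension[OF subspace_complexification[OF subspace_R] dense
        scaleC_complexification[OF subspace_R] complexification_conj_mem[OF R(1)]
        complexification_conj_add[OF R(1)] complexification_conj_scaleC[OF R(1)]
        norm_complexification_conj[OF R(1)] complexification_conj_involution[OF R(1)]]
    by blast
  have B_cont: "continuous_on UNIV B"
    using assms(1) by (simp add: bounded_clinear_imp_bounded_linear linear_continuous_on)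
  have "C (B v) = B (C v)" if "v \<in> complexification R" for v
    using complexification_conj_commute[OF R(1) assms(1) R(2) that] C_eq that by simp
  then have commute: "C (B x) = B (C x)" for x
    using continuous_on_dense_eq[OF continuous_on_compose2[OF C(2) B_cont]
        continuous_on_compose2[OF B_cont C(2)] dense]
    by simp
  have "e \<in> complexification R"
    using subset_complexification[OF subspace_R] R(3) by blast
  then have "C e = complexification_conj R e"
    by (rule C_eq)
  also have "\<dots> = e"
    by (rule complexification_conj_fixes[OF R(1) R(3)])
  finally show ?thesis
    using that[OF C(1) commute] by blast
qed

subsection \<open>Rank-one real or imaginary part\<close>

lemma crank_eq_1_generatorE:
  assumes "crank A = 1"
  obtains e where "\<And>x. \<exists>c. A x = scaleC c e"
proof -
  let ?P = "\<lambda>n. \<exists>F. finite F \<and> card F = n \<and> cspan F = range A"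
  have ex: "\<exists>F. finite F \<and> cspan F = range A"
    using assms unfolding crank_def by (metis zero_neq_one)
  then obtain F0 where "finite F0" "cspan F0 = range A"
    by blast
  then have "?P (card F0)"
    by (intro exI[of _ F0]) simp
  then have "?P (LEAST n. ?P n)"
    by (rule LeastI)
  moreover have "(LEAST n. ?P n) = 1"
    using assms unfolding crank_def if_P[OF ex] .
  ultimately obtain F where "card F = 1" and F: "cspan F = range A"
    by auto
  from \<open>card F = 1\<close> obtain e where "F = {e}"
    by (rule card_1_singletonE)
  with F have e: "cspan {e} = range A"
    by simp
  have "\<exists>c. A x = scaleC c e" for x
  proof -
    have "A x \<in> cspan {e}"
      using e by blast
    then obtain F c where Ax: "A x = (\<Sum>v\<in>F. scaleC (c v) v)" and "F \<subseteq> {e}"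
      unfolding cspan_def by blast
    then consider "F = {}" | "F = {e}"
      by blast
    then show ?thesis
    proof cases
      case 1
      then show ?thesis
        using Ax by (intro exI[of _ 0]) simp
    next
      case 2
      then show ?thesis
        using Ax by (intro exI[of _ "c e"]) simp
    qed
  qed
  then show ?thesis
    using that by blast
qed

lemma cinner_conjugation:
  assumes "conjugation C"
  shows "cinner (C a) (C b) = cnj (cinner a (b::'a::cinner_space))"
proof -
  have C_add: "C (x + y) = C x + C y" and C_scaleC: "C (scaleC k x) = scaleC (cnj k) (C x)"
    and C_norm: "norm (C x) = norm x" for x y k
    using assms unfolding conjugation_def by blast+
  have Re_eq: "Re (cinner (C x) (C y)) = Re (cinner x y)" for x y
  proof -
    have "(norm (C x + C y))\<^sup>2 = (norm (x + y))\<^sup>2"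
      by (simp only: C_norm flip: C_add)
    then show ?thesis
      by (simp add: norm_add_square C_norm)
  qed
  have "Im (cinner (C a) (C b)) = - Im (cinner a b)"
    using Re_eq[of a "scaleC \<i> b"] by (simp add: C_scaleC cinner_scaleC_right)
  then show ?thesis
    using Re_eq[of a b] by (simp add: complex_eq_iff)
qed

lemma conjugation_rank_one_selfadjoint:
  fixes A C :: "'a::cinner_space \<Rightarrow> 'a"
  assumes "selfadjoint A" "\<And>x. \<exists>c. A x = scaleC c e" "conjugation C" "C e = e"
  shows "C (A (C x)) = A x"
proof (cases "e = 0")
  case True
  then have "A y = 0" for y
    using assms(2)[of y] by auto
  moreover have "C (scaleC 0 0) = scaleC (cnj 0) (C 0)"
    using assms(3) unfolding conjugation_def by blast
  then have "C 0 = 0"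
    by simp
  ultimately show ?thesis
    by simp
next
  case False
  define n where "n = cinner e e"
  have "n \<noteq> 0" "cnj n = n"
    unfolding n_def using False by (simp_all add: cinner_self_norm)
  have adj: "cinner (A u) v = cinner u (A v)" for u v
    using assms(1) unfolding selfadjoint_def is_adjoint_def by blast
  obtain k where k: "A e = scaleC k e"
    using assms(2) by blast
  have "cnj k * n = k * n"
    using adj[of e e] by (simp add: k cinner_scaleC_left cinner_scaleC_right n_def)
  then have "cnj k = k"
    using \<open>n \<noteq> 0\<close> by simp
  have A_eq: "A y = scaleC (k / n * cinner e y) e" for y
  proof -
    obtain c where c: "A y = scaleC c e"
      using assms(2) by blast
    have "c * n = k * cinner e y"
      using adj[of e y] \<open>cnj k = k\<close> by (simp add: c k cinner_scaleC_left cinner_scaleC_right n_def)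
    then have "c = k / n * cinner e y"
      using \<open>n \<noteq> 0\<close> by (simp add: field_simps)
    then show ?thesis
      using c by simp
  qed
  have C_scaleC: "C (scaleC a y) = scaleC (cnj a) (C y)" for a y
    using assms(3) unfolding conjugation_def by blast
  have "cinner e (C x) = cnj (cinner e x)"
    using cinner_conjugation[OF assms(3), of e x] assms(4) by simp
  then show ?thesis
    using \<open>cnj k = k\<close> \<open>cnj n = n\<close> by (simp add: A_eq C_scaleC assms(4))
qed

lemma complex_symmetric_if_conjugation_fixes_parts:
  assumes "selfadjoint A" "selfadjoint B" "conjugation C"
    and "\<And>x. C (A (C x)) = A x" "\<And>x. C (B (C x)) = B x"
    and "\<And>x. T x = A x + scaleC \<i> (B x)"
  shows "complex_symmetric T"
proof -
  define S where "S x = A x + scaleC (- \<i>) (B x)" for x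
  have adjA: "cinner (A u) v = cinner u (A v)" and adjB: "cinner (B u) v = cinner u (B v)" for u v
    using assms(1,2) unfolding selfadjoint_def is_adjoint_def by blast+
  have "is_adjoint T S"
    unfolding is_adjoint_def
  proof (intro allI)
    fix x y
    have "cinner (T x) y = cinner x (A y) + (- \<i>) * cinner x (B y)"
      by (simp add: assms(6) cinner_add_left cinner_scaleC_left adjA adjB)
    also have "\<dots> = cinner x (S y)"
      by (simp add: S_def cinner_add_right cinner_scaleC_right)
    finally show "cinner (T x) y = cinner x (S y)" .
  qed
  moreover have "T x = C (S (C x))" for x
  proof -
    have C_add: "C (u + v) = C u + C v" and C_scaleC: "C (scaleC k u) = scaleC (cnj k) (C u)" for u v k
      using assms(3) unfolding conjugation_def by blast+
    show ?thesis
      by (simp add: S_def C_add C_scaleC assms(4,5,6))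
  qed
  ultimately show ?thesis
    unfolding complex_symmetric_def using assms(3) by blast
qed

lemma conjugation_fixing_rank_one_and_selfadjoint:
  fixes A B :: "'a::chilbert_space \<Rightarrow> 'a"
  assumes "selfadjoint A" "crank A = 1" "bounded_clinear B" "selfadjoint B"
  obtains C where "conjugation C" "\<And>x. C (A (C x)) = A x" "\<And>x. C (B (C x)) = B x"
proof -
  obtain e where e: "\<And>x. \<exists>c. A x = scaleC c e"
    using crank_eq_1_generatorE[OF assms(2)] by blast
  obtain C where C: "conjugation C" "\<And>x. C (B x) = B (C x)" "C e = e"
    using exists_conjugation_commuting[OF assms(3,4)] by blast
  have "C (A (C x)) = A x" for x
    by (rule conjugation_rank_one_selfadjoint[OF assms(1) e C(1,3)])
  moreover have "C (B (C x)) = B x" for x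
    using C(1,2) unfolding conjugation_def by simp
  ultimately show ?thesis
    by (rule that[OF C(1)])
qed

theorem corollary4p4:
  fixes T A B :: "'a::chilbert_space \<Rightarrow> 'a"
  assumes "separable_space TYPE('a)"
    and "bounded_clinear T"
    and "bounded_clinear A" and "selfadjoint A"
    and "bounded_clinear B" and "selfadjoint B"
    and "\<forall>x. T x = A x + scaleC \<i> (B x)"
    and "crank A = 1 \<or> crank B = 1"
  shows "complex_symmetric T"
proof -
  obtain C where C: "conjugation C" "\<And>x. C (A (C x)) = A x" "\<And>x. C (B (C x)) = B x"
    using assms(8)
  proof
    assume "crank A = 1"
    then show thesis
      by (rule conjugation_fixing_rank_one_and_selfadjoint[OF assms(4) _ assms(5,6)]) (rule that)
  next
    assume "crank B = 1"
    then show thesis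
      by (rule conjugation_fixing_rank_one_and_selfadjoint[OF assms(6) _ assms(3,4)]) (rule that)
  qed
  show ?thesis
    by (rule complex_symmetric_if_conjugation_fixes_parts[OF assms(4,6) C assms(7)[rule_format]])
qed

end
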